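(* Let $H$ be a separable complex Hilbert space, $(\Omega,\mu)$ a measure space with positive measure, let $K\in B(H)$ have closed range, let $F:\Omega\to H$ be a Parseval continuous $K$-frame of $H$, and let $\tilde F(\omega)=K^{\dagger}F(\omega)$ be its canonical dual continuous $K$-Bessel sequence. Let $f\in H$. Then for any $c\in L^2(\Omega,\mu)$ satisfying $Kf=\int_\Omega c(\omega)F(\omega)\,d\mu(\omega)$, we have $$\int_\Omega|c(\omega)|^2\,d\mu(\omega)=\int_\Omega|c(\omega)-\langle f,\tilde F(\omega)\rangle|^2\,d\mu(\omega)+\int_\Omega|\langle f,\tilde F(\omega)\rangle|^2\,d\mu(\omega).$$
   Context: A map $F:\Omega\to H$ is weakly measurable if $\omega\mapsto\langle f,F(\omega)\rangle$ is measurable for every $f\in H$. A Parseval continuous $K$-frame is a weakly measurable $F$ with $\int_\Omega|\langle f,F(\omega)\rangle|^2\,d\mu(\omega)=\|K^{\ast}f\|^2$ for all $f\in H$. Integrals $\int_\Omega c(\omega)F(\omega)\,d\mu(\omega)$ are understood weakly. $K^{\dagger}$ is the Moore–Penrose pseudo-inverse of the closed-range operator $K$; the canonical dual continuous $K$-Bessel sequence of $F$ is $K^{\dagger}F$, which satisfies $Kg=\int_\Omega\langle g,K^\dagger F(\omega)\rangle F(\omega)\,d\mu(\omega)$ for all $g\in H$. *)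

theory Defs
  imports "HOL-Analysis.Analysis" "HOL-Probability.Probability"
begin

class complex_vector = real_vector +
  fixes scaleC :: "complex \<Rightarrow> 'a \<Rightarrow> 'a"
  assumes scaleC_add_right: "scaleC a (x + y) = scaleC a x + scaleC a y"
    and scaleC_add_left: "scaleC (a + b) x = scaleC a x + scaleC b x"
    and scaleC_scaleC: "scaleC a (scaleC b x) = scaleC (a * b) x"
    and scaleC_one: "scaleC 1 x = x"
    and scaleR_scaleC: "scaleR r x = scaleC (complex_of_real r) x"

class complex_inner = complex_vector + real_normed_vector +
  fixes cinner :: "'a \<Rightarrow> 'a \<Rightarrow> complex"
  assumes cinner_commute: "cinner x y = cnj (cinner y x)"
    and cinner_add_left: "cinner (x + y) z = cinner x z + cinner y z"
    and cinner_scaleC_left: "cinner (scaleC a x) y = a * cinner x y"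
    and cinner_nonneg: "Im (cinner x x) = 0 \<and> 0 \<le> Re (cinner x x)"
    and cinner_eq_zero_iff: "cinner x x = 0 \<longleftrightarrow> x = 0"
    and norm_eq_sqrt_cinner: "norm x = sqrt (Re (cinner x x))"

text \<open>A (complex) Hilbert space is a complete complex inner product space:
  type class constraint \<open>{complex_inner, complete_space}\<close>.\<close>

definition separable_space :: "'a::topological_space itself \<Rightarrow> bool" where
  "separable_space _ \<longleftrightarrow> (\<exists>D::'a set. countable D \<and> closure D = UNIV)"

definition bounded_clinear :: "('a::complex_inner \<Rightarrow> 'b::complex_inner) \<Rightarrow> bool" where
  "bounded_clinear K \<longleftrightarrow>
     (\<forall>x y. K (x + y) = K x + K y) \<and> (\<forall>a x. K (scaleC a x) = scaleC a (K x)) \<and>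
     (\<exists>B. \<forall>x. norm (K x) \<le> B * norm x)"

definition orth_compl :: "'a::complex_inner set \<Rightarrow> 'a set" where
  "orth_compl M = {y. \<forall>x\<in>M. cinner x y = 0}"

definition ker :: "('a \<Rightarrow> 'b::zero) \<Rightarrow> 'a set" where
  "ker K = {x. K x = 0}"

definition cproj :: "'a::complex_inner set \<Rightarrow> 'a \<Rightarrow> 'a" where
  "cproj M y = (THE z. z \<in> M \<and> y - z \<in> orth_compl M)"

definition cadjoint :: "('a::complex_inner \<Rightarrow> 'b::complex_inner) \<Rightarrow> 'b \<Rightarrow> 'a" where
  "cadjoint K = (SOME G. \<forall>x y. cinner (K x) y = cinner x (G y))"

definition pinv :: "('a::complex_inner \<Rightarrow> 'a) \<Rightarrow> 'a \<Rightarrow> 'a" where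
  "pinv K y = (THE x. x \<in> orth_compl (ker K) \<and> K x = cproj (range K) y)"

definition weakly_measurable :: "'w measure \<Rightarrow> ('w \<Rightarrow> 'a::complex_inner) \<Rightarrow> bool" where
  "weakly_measurable M F \<longleftrightarrow> (\<forall>f. (\<lambda>\<omega>. cinner f (F \<omega>)) \<in> borel_measurable M)"

definition parseval_cont_K_frame ::
    "'w measure \<Rightarrow> ('a::complex_inner \<Rightarrow> 'a) \<Rightarrow> ('w \<Rightarrow> 'a) \<Rightarrow> bool" where
  "parseval_cont_K_frame M K F \<longleftrightarrow> weakly_measurable M F \<and>
     (\<forall>f. (\<integral>\<^sup>+\<omega>. ennreal ((cmod (cinner f (F \<omega>)))\<^sup>2) \<partial>M) = ennreal ((norm (cadjoint K f))\<^sup>2))"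

definition square_integrable :: "'w measure \<Rightarrow> ('w \<Rightarrow> complex) \<Rightarrow> bool" where
  "square_integrable M c \<longleftrightarrow> c \<in> borel_measurable M \<and> integrable M (\<lambda>\<omega>. (cmod (c \<omega>))\<^sup>2)"

definition has_weak_integral ::
    "'w measure \<Rightarrow> ('w \<Rightarrow> complex) \<Rightarrow> ('w \<Rightarrow> 'a::complex_inner) \<Rightarrow> 'a \<Rightarrow> bool" where
  "has_weak_integral M c F g \<longleftrightarrow>
     (\<forall>h. integrable M (\<lambda>\<omega>. c \<omega> * cinner (F \<omega>) h) \<and>
          cinner g h = (\<integral>\<omega>. c \<omega> * cinner (F \<omega>) h \<partial>M))"

end

theory Submission
  imports Defs
begin

text \<open>Put \<open>g = (K\<^sup>\<dagger>)\<^sup>* f\<close>, so that \<open>\<langle>f, K\<^sup>\<dagger>F(\<omega>)\<rangle> = \<langle>g, F(\<omega>)\<rangle>\<close>. Since \<open>K\<^sup>\<dagger>K\<close> is the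
  orthogonal projection \<open>P\<close> onto \<open>(ker K)\<^sup>\<perp>\<close>, we get \<open>K\<^sup>* g = P f\<close>. The Parseval identity gives
  \<open>\<integral>|\<langle>g, F\<rangle>|\<^sup>2 = \<parallel>K\<^sup>* g\<parallel>\<^sup>2 = \<parallel>P f\<parallel>\<^sup>2\<close>, and testing \<open>K f = \<integral> c F\<close> against \<open>g\<close> gives
  \<open>\<integral> c \<langle>F, g\<rangle> = \<langle>f, K\<^sup>* g\<rangle> = \<parallel>P f\<parallel>\<^sup>2\<close>; expanding \<open>|c - \<langle>g, F\<rangle>|\<^sup>2\<close> yields the identity.
  Besides the projection theorem and the Riesz representation, the one analytic input is that
  \<open>K\<^sup>\<dagger>\<close> is bounded, which follows from the closedness of the range of \<open>K\<close> by a Baire category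
  argument.\<close>

lemma scaleC_zero_right [simp]: "scaleC a (0::'a::complex_vector) = 0"
proof -
  have "scaleC a 0 + scaleC a 0 = scaleC a (0::'a) + 0"
    by (simp add: scaleC_add_right[symmetric])
  then show ?thesis by (rule add_left_imp_eq)
qed

lemma scaleC_zero_left [simp]: "scaleC 0 (x::'a::complex_vector) = 0"
  using scaleR_scaleC[of 0 x] by simp

lemma scaleC_minus1: "scaleC (-1) x = - (x::'a::complex_vector)"
  using scaleR_scaleC[of "-1" x] by simp

lemma scaleC_diff_right: "scaleC a (x - y) = scaleC a x - scaleC a (y::'a::complex_vector)"
  using scaleC_add_right[of a "x - y" y] by (simp add: eq_diff_eq)

lemma cinner_add_right: "cinner x (y + z) = cinner x y + cinner x (z::'a::complex_inner)"
  by (subst (1 2 3) cinner_commute) (simp add: cinner_add_left)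

lemma cinner_scaleC_right: "cinner x (scaleC a y) = cnj a * cinner x (y::'a::complex_inner)"
  by (subst (1 2) cinner_commute) (simp add: cinner_scaleC_left)

lemma cinner_zero_left [simp]: "cinner 0 (y::'a::complex_inner) = 0"
  using cinner_scaleC_left[of 0 0 y] by simp

lemma cinner_zero_right [simp]: "cinner (x::'a::complex_inner) 0 = 0"
  using cinner_scaleC_right[of x 0 0] by simp

lemma cinner_diff_left: "cinner (x - y) (z::'a::complex_inner) = cinner x z - cinner y z"
  using cinner_add_left[of "x - y" y z] by simp

lemma cinner_diff_right: "cinner x (y - z::'a::complex_inner) = cinner x y - cinner x z"
  using cinner_add_right[of x "y - z" z] by simp

lemma power2_norm_eq_cinner: "(norm x)\<^sup>2 = Re (cinner x (x::'a::complex_inner))"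
  by (simp add: norm_eq_sqrt_cinner cinner_nonneg)

lemma cinner_self: "cinner x x = complex_of_real ((norm (x::'a::complex_inner))\<^sup>2)"
  by (simp add: power2_norm_eq_cinner complex_eq_iff cinner_nonneg)

lemma cinner_eq_rightI:
  assumes "\<And>x. cinner x y = cinner x (z::'a::complex_inner)"
  shows "y = z"
proof -
  have "cinner (y - z) (y - z) = 0"
    by (simp add: cinner_diff_right assms)
  then show ?thesis by (simp add: cinner_eq_zero_iff)
qed

lemma norm_scaleC: "norm (scaleC a x) = cmod a * norm (x::'a::complex_inner)"
proof -
  have "(norm (scaleC a x))\<^sup>2 = Re (a * cnj a * cinner x x)"
    by (simp only: power2_norm_eq_cinner cinner_scaleC_left cinner_scaleC_right mult.assoc
        mult.left_commute)
  also have "a * cnj a * cinner x x = complex_of_real ((cmod a * norm x)\<^sup>2)"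
    by (simp only: cinner_self complex_norm_square[symmetric] power_mult_distrib of_real_mult
        of_real_power)
  finally show ?thesis
    by (simp add: power2_eq_imp_eq)
qed

lemma power2_norm_add:
  "(norm (x + y))\<^sup>2 = (norm x)\<^sup>2 + 2 * Re (cinner x y) + (norm (y::'a::complex_inner))\<^sup>2"
proof -
  have "Re (cinner y x) = Re (cinner x y)" by (subst cinner_commute) simp
  then show ?thesis
    by (simp add: power2_norm_eq_cinner cinner_add_left cinner_add_right)
qed

lemma power2_norm_diff:
  "(norm (x - y))\<^sup>2 = (norm x)\<^sup>2 - 2 * Re (cinner x y) + (norm (y::'a::complex_inner))\<^sup>2"
  using power2_norm_add[of x "- y"] cinner_diff_right[of x 0 y] by simp

lemma parallelogram_law:
  "(norm (x + y))\<^sup>2 + (norm (x - y))\<^sup>2 = 2 * (norm x)\<^sup>2 + 2 * (norm (y::'a::complex_inner))\<^sup>2"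
  by (simp add: power2_norm_add power2_norm_diff)

lemma norm_le_norm_add_orthogonal:
  assumes "cinner x y = 0"
  shows "norm x \<le> norm (x + (y::'a::complex_inner))"
proof -
  have "(norm (x + y))\<^sup>2 = (norm x)\<^sup>2 + (norm y)\<^sup>2"
    using assms by (simp add: power2_norm_add)
  then have "(norm x)\<^sup>2 \<le> (norm (x + y))\<^sup>2"
    by simp
  then show ?thesis
    by (rule power2_le_imp_le) simp
qed

lemma norm_cinner_le: "cmod (cinner x y) \<le> norm x * norm (y::'a::complex_inner)"
proof (cases "y = 0")
  case True then show ?thesis by simp
next
  case False
  define a where "a = cinner x y"
  define n where "n = (norm y)\<^sup>2"
  have n: "n > 0" using False by (simp add: n_def)
  define t where "t = a / complex_of_real n"
  \<comment> \<open>expand \<open>0 \<le> \<parallel>x - t y\<parallel>\<^sup>2\<close> at the minimising \<open>t\<close>\<close>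
  have "0 \<le> (norm (x - scaleC t y))\<^sup>2" by simp
  also have "\<dots> = (norm x)\<^sup>2 - 2 * Re (cnj t * a) + (cmod t)\<^sup>2 * n"
    by (simp add: power2_norm_diff cinner_scaleC_right a_def norm_scaleC power_mult_distrib n_def)
  also have "cnj t * a = complex_of_real ((cmod a)\<^sup>2 / n)"
    by (simp add: t_def complex_norm_square[symmetric] mult.commute)
  also have "(cmod t)\<^sup>2 * n = (cmod a)\<^sup>2 / n"
    using n by (simp add: t_def norm_divide power_divide power2_eq_square)
  finally have "(cmod a)\<^sup>2 \<le> (norm x * norm y)\<^sup>2"
    using n by (simp add: field_simps n_def power_mult_distrib)
  then show ?thesis
    unfolding a_def by (rule power2_le_imp_le) simp
qed

lemma bounded_clinearD:
  assumes "bounded_clinear K"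
  shows "K (x + y) = K x + K y" and "K (scaleC a x) = scaleC a (K x)"
  using assms unfolding bounded_clinear_def by blast+

lemma bounded_clinear_zero: "bounded_clinear K \<Longrightarrow> K 0 = 0"
  using bounded_clinearD(2)[of K 0 0] by simp

lemma bounded_clinear_bounded_linear:
  assumes "bounded_clinear (K::'a::complex_inner \<Rightarrow> 'b::complex_inner)"
  shows "bounded_linear K"
proof -
  from assms obtain B where B: "\<And>x. norm (K x) \<le> B * norm x"
    unfolding bounded_clinear_def by blast
  show ?thesis
  proof (rule bounded_linear_intro)
    show "norm (K x) \<le> norm x * B" for x using B by (metis mult.commute)
  qed (simp_all add: bounded_clinearD[OF assms] scaleR_scaleC)
qed

lemma bounded_clinear_intro:
  assumes "\<And>x y. K (x + y) = K x + K y" "\<And>a x. K (scaleC a x) = scaleC a (K x)"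
    and "\<And>x. norm (K x) \<le> B * norm x"
  shows "bounded_clinear K"
  unfolding bounded_clinear_def using assms by blast

section \<open>Orthogonal projection onto closed subspaces\<close>

definition csubspace :: "'a::complex_vector set \<Rightarrow> bool" where
  "csubspace M \<longleftrightarrow> 0 \<in> M \<and> (\<forall>x\<in>M. \<forall>y\<in>M. x + y \<in> M) \<and> (\<forall>a. \<forall>x\<in>M. scaleC a x \<in> M)"

lemma csubspace_0: "csubspace M \<Longrightarrow> 0 \<in> M"
  by (simp add: csubspace_def)

lemma csubspace_add: "csubspace M \<Longrightarrow> x \<in> M \<Longrightarrow> y \<in> M \<Longrightarrow> x + y \<in> M"
  by (simp add: csubspace_def)

lemma csubspace_scaleC: "csubspace M \<Longrightarrow> x \<in> M \<Longrightarrow> scaleC a x \<in> M"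
  by (simp add: csubspace_def)

lemma csubspace_scaleR: "csubspace M \<Longrightarrow> x \<in> M \<Longrightarrow> scaleR r x \<in> M"
  by (simp add: scaleR_scaleC csubspace_scaleC)

lemma csubspace_diff: "csubspace M \<Longrightarrow> x \<in> M \<Longrightarrow> y \<in> M \<Longrightarrow> x - y \<in> M"
  using csubspace_add[of M x "scaleC (-1) y"] csubspace_scaleC[of M y "-1"]
  by (simp add: scaleC_minus1)

lemma orth_complI: "(\<And>x. x \<in> M \<Longrightarrow> cinner x y = 0) \<Longrightarrow> y \<in> orth_compl M"
  by (simp add: orth_compl_def)

lemma orth_complD: "y \<in> orth_compl M \<Longrightarrow> x \<in> M \<Longrightarrow> cinner x y = 0"
  by (simp add: orth_compl_def)

lemma orth_complD': "y \<in> orth_compl M \<Longrightarrow> x \<in> M \<Longrightarrow> cinner y x = 0"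
  by (metis orth_complD cinner_commute complex_cnj_zero)

lemma csubspace_orth_compl: "csubspace (orth_compl M)"
  unfolding csubspace_def orth_compl_def by (simp add: cinner_add_right cinner_scaleC_right)

lemma orth_compl_Int_eq_0: "x \<in> M \<Longrightarrow> x \<in> orth_compl M \<Longrightarrow> x = 0"
  using orth_complD cinner_eq_zero_iff by blast

lemma Cauchy_if_dist_le:
  fixes s :: "nat \<Rightarrow> 'a::metric_space"
  assumes "\<And>N n. N \<le> n \<Longrightarrow> dist (s n) (s N) \<le> b N" and "b \<longlonglongrightarrow> 0"
  shows "Cauchy s"
  unfolding Cauchy_altdef2
proof (intro allI impI)
  fix e :: real assume "e > 0"
  then have "\<forall>\<^sub>F N in sequentially. b N < e"
    using assms(2) by (rule order_tendstoD(2)[rotated])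
  then obtain N where "b N < e"
    unfolding eventually_sequentially by blast
  then have "\<forall>n\<ge>N. dist (s n) (s N) < e"
    using assms(1) by (blast intro: order.strict_trans1)
  then show "\<exists>N. \<forall>n\<ge>N. dist (s n) (s N) < e" ..
qed

lemma orth_compl_if_nearest:
  fixes M :: "'a::complex_inner set"
  assumes "csubspace M" "z \<in> M" and nearest: "\<And>m. m \<in> M \<Longrightarrow> norm (y - z) \<le> norm (y - m)"
  shows "y - z \<in> orth_compl M"
proof (rule orth_complI)
  fix m assume m: "m \<in> M"
  define w where "w = y - z"
  define a where "a = cinner m w"
  define s where "s = 1 / ((norm m)\<^sup>2 + 1)"
  have "0 < (norm m)\<^sup>2 + 1" by (simp add: add_nonneg_pos)
  then have s: "s > 0" "s * (norm m)\<^sup>2 < 1" by (auto simp: s_def field_simps)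
  \<comment> \<open>moving \<open>z\<close> by a small multiple of \<open>m\<close> in the direction of \<open>a\<close> would otherwise get closer to \<open>y\<close>\<close>
  define t where "t = complex_of_real s * cnj a"
  have "z + scaleC t m \<in> M" using assms m by (simp add: csubspace_add csubspace_scaleC)
  then have "norm w \<le> norm (w - scaleC t m)"
    using nearest[of "z + scaleC t m"] by (simp add: w_def algebra_simps)
  then have "(norm w)\<^sup>2 \<le> (norm (w - scaleC t m))\<^sup>2" by simp
  also have "\<dots> = (norm w)\<^sup>2 - 2 * Re (cnj t * cinner w m) + (cmod t)\<^sup>2 * (norm m)\<^sup>2"
    by (simp add: power2_norm_diff cinner_scaleC_right norm_scaleC power_mult_distrib)
  also have "cinner w m = cnj a" by (simp add: a_def cinner_commute[of w m])
  also have "cnj t * cnj a = complex_of_real (s * (cmod a)\<^sup>2)"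
    using complex_norm_square[of a] by (simp add: t_def mult.assoc)
  also have "(cmod t)\<^sup>2 = s\<^sup>2 * (cmod a)\<^sup>2"
    using s by (simp add: t_def norm_mult power_mult_distrib)
  finally have "0 \<le> s * (cmod a)\<^sup>2 * (s * (norm m)\<^sup>2 - 2)"
    by (simp add: algebra_simps power2_eq_square)
  moreover have "s * (norm m)\<^sup>2 - 2 < 0" using s by simp
  ultimately have "s * (cmod a)\<^sup>2 \<le> 0"
    by (simp add: mult_le_0_iff zero_le_mult_iff)
  then have "cmod a = 0" using s by (simp add: mult_le_0_iff)
  then show "cinner m (y - z) = 0" by (simp add: a_def w_def)
qed

lemma norm_diff_le_if_almost_nearest:
  fixes M :: "'a::complex_inner set"
  assumes "csubspace M" and nearest: "\<And>m. m \<in> M \<Longrightarrow> \<delta> \<le> norm (y - m)" and "0 \<le> \<delta>"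
    and "a \<in> M" "b \<in> M" "norm (y - a) \<le> \<delta> + \<epsilon>" "norm (y - b) \<le> \<delta> + \<epsilon>"
  shows "(norm (a - b))\<^sup>2 \<le> 4 * \<epsilon> * (2 * \<delta> + \<epsilon>)"
proof -
  define c where "c = scaleR (1/2) (a + b)"
  have "c \<in> M"
    using assms by (simp add: c_def csubspace_add csubspace_scaleR)
  have "(y - a) + (y - b) = scaleR 2 (y - c)"
    by (simp add: c_def algebra_simps scaleR_2)
  then have "norm ((y - a) + (y - b)) = 2 * norm (y - c)"
    by simp
  with nearest[OF \<open>c \<in> M\<close>] have "(2 * \<delta>)\<^sup>2 \<le> (norm ((y - a) + (y - b)))\<^sup>2"
    using \<open>0 \<le> \<delta>\<close> by (intro power_mono) simp_all
  moreover have "(norm (y - a))\<^sup>2 \<le> (\<delta> + \<epsilon>)\<^sup>2" "(norm (y - b))\<^sup>2 \<le> (\<delta> + \<epsilon>)\<^sup>2"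
    using assms(6,7) by (simp_all add: power_mono)
  moreover have "(norm ((y - a) + (y - b)))\<^sup>2 + (norm (a - b))\<^sup>2
      = 2 * (norm (y - a))\<^sup>2 + 2 * (norm (y - b))\<^sup>2"
    using parallelogram_law[of "y - a" "y - b"] by (simp add: norm_minus_commute)
  ultimately have "(norm (a - b))\<^sup>2 \<le> 4 * (\<delta> + \<epsilon>)\<^sup>2 - (2 * \<delta>)\<^sup>2"
    by linarith
  also have "\<dots> = 4 * \<epsilon> * (2 * \<delta> + \<epsilon>)"
    by (simp add: power2_eq_square algebra_simps)
  finally show ?thesis .
qed

lemma nearest_point_exists:
  fixes M :: "'a::{complex_inner,complete_space} set"
  assumes "csubspace M" "closed M"
  obtains z where "z \<in> M" "\<And>m. m \<in> M \<Longrightarrow> norm (y - z) \<le> norm (y - m)"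
proof -
  define \<delta> where "\<delta> = Inf ((\<lambda>m. norm (y - m)) ` M)"
  have \<delta>_le: "\<delta> \<le> norm (y - m)" if "m \<in> M" for m
    unfolding \<delta>_def using that by (auto intro!: cInf_lower bdd_belowI[of _ 0])
  have "0 \<le> \<delta>"
    unfolding \<delta>_def using csubspace_0[OF assms(1)] by (auto intro!: cInf_greatest)
  define e where "e = (\<lambda>n. inverse (real (Suc n)))"
  have "\<exists>m\<in>M. norm (y - m) < \<delta> + e n" for n
    using cInf_lessD[of "(\<lambda>m. norm (y - m)) ` M" "\<delta> + e n"] csubspace_0[OF assms(1)]
    by (auto simp: \<delta>_def e_def)
  then obtain s where s_in: "\<And>n. s n \<in> M" and s_near: "\<And>n. norm (y - s n) < \<delta> + e n"
    by metis
  have "Cauchy s"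
  proof (rule Cauchy_if_dist_le)
    show "dist (s n) (s N) \<le> sqrt (4 * e N * (2 * \<delta> + e N))" if "N \<le> n" for N n
    proof (rule real_le_rsqrt)
      have "e n \<le> e N" using that by (simp add: e_def le_imp_inverse_le)
      then show "(dist (s n) (s N))\<^sup>2 \<le> 4 * e N * (2 * \<delta> + e N)"
        using norm_diff_le_if_almost_nearest[OF assms(1) \<delta>_le \<open>0 \<le> \<delta>\<close> s_in s_in]
          s_near[of n] s_near[of N] by (simp add: dist_norm less_imp_le)
    qed
    have "(\<lambda>N. sqrt (4 * e N * (2 * \<delta> + e N))) \<longlonglongrightarrow> sqrt (4 * 0 * (2 * \<delta> + 0))"
      unfolding e_def by (intro tendsto_intros LIMSEQ_inverse_real_of_nat)
    then show "(\<lambda>N. sqrt (4 * e N * (2 * \<delta> + e N))) \<longlonglongrightarrow> 0" by simp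
  qed
  then obtain z where lim: "s \<longlonglongrightarrow> z"
    using Cauchy_convergent_iff convergent_def by blast
  have "z \<in> M" using assms(2) s_in lim closed_sequentially by blast
  have "(\<lambda>n. norm (y - s n)) \<longlonglongrightarrow> norm (y - z)" by (intro tendsto_intros lim)
  moreover have "(\<lambda>n. \<delta> + e n) \<longlonglongrightarrow> \<delta>"
    unfolding e_def using tendsto_add[OF tendsto_const LIMSEQ_inverse_real_of_nat] by simp
  ultimately have "norm (y - z) \<le> \<delta>"
    using s_near by (intro LIMSEQ_le) (auto intro: less_imp_le)
  with \<delta>_le show ?thesis
    using that[OF \<open>z \<in> M\<close>] order_trans by blast
qed

lemma orth_decomposition_unique:
  fixes M :: "'a::complex_inner set"
  assumes "csubspace M" "z \<in> M" "y - z \<in> orth_compl M" "z' \<in> M" "y - z' \<in> orth_compl M"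
  shows "z = z'"
proof -
  have "z - z' = (y - z') - (y - z)" by simp
  then have "z - z' \<in> orth_compl M"
    using assms csubspace_orth_compl csubspace_diff by metis
  moreover have "z - z' \<in> M" using assms by (simp add: csubspace_diff)
  ultimately show ?thesis using orth_compl_Int_eq_0 by fastforce
qed

lemma
  fixes M :: "'a::{complex_inner,complete_space} set"
  assumes "csubspace M" "closed M"
  shows cproj_in: "cproj M y \<in> M" and cproj_orth: "y - cproj M y \<in> orth_compl M"
proof -
  obtain z where "z \<in> M" "y - z \<in> orth_compl M"
    using nearest_point_exists[OF assms] orth_compl_if_nearest[OF assms(1)] by metis
  then have "\<exists>!z. z \<in> M \<and> y - z \<in> orth_compl M"
    using orth_decomposition_unique[OF assms(1)] by blast
  then have "cproj M y \<in> M \<and> y - cproj M y \<in> orth_compl M"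
    unfolding cproj_def by (rule theI')
  then show "cproj M y \<in> M" "y - cproj M y \<in> orth_compl M" by auto
qed

lemma cproj_eqI:
  fixes M :: "'a::{complex_inner,complete_space} set"
  assumes "csubspace M" "closed M" "z \<in> M" "y - z \<in> orth_compl M"
  shows "cproj M y = z"
  using orth_decomposition_unique assms cproj_in cproj_orth by metis

lemma norm_cproj_le:
  fixes M :: "'a::{complex_inner,complete_space} set"
  assumes "csubspace M" "closed M"
  shows "norm (cproj M y) \<le> norm y"
proof -
  have "cinner (cproj M y) (y - cproj M y) = 0"
    by (rule orth_complD[OF cproj_orth[OF assms] cproj_in[OF assms]])
  then show ?thesis using norm_le_norm_add_orthogonal by fastforce
qed

lemma norm_diff_cproj_le:
  fixes M :: "'a::{complex_inner,complete_space} set"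
  assumes "csubspace M" "closed M"
  shows "norm (y - cproj M y) \<le> norm y"
proof -
  have "cinner (y - cproj M y) (cproj M y) = 0"
    by (rule orth_complD'[OF cproj_orth[OF assms] cproj_in[OF assms]])
  then show ?thesis using norm_le_norm_add_orthogonal by fastforce
qed

lemma cproj_add:
  fixes M :: "'a::{complex_inner,complete_space} set"
  assumes "csubspace M" "closed M"
  shows "cproj M (x + y) = cproj M x + cproj M y"
proof (rule cproj_eqI[OF assms])
  show "cproj M x + cproj M y \<in> M"
    using assms by (simp add: cproj_in csubspace_add)
  have "x + y - (cproj M x + cproj M y) = (x - cproj M x) + (y - cproj M y)" by simp
  then show "x + y - (cproj M x + cproj M y) \<in> orth_compl M"
    using assms cproj_orth csubspace_orth_compl csubspace_add by metis
qed

lemma cproj_scaleC: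
  fixes M :: "'a::{complex_inner,complete_space} set"
  assumes "csubspace M" "closed M"
  shows "cproj M (scaleC a x) = scaleC a (cproj M x)"
proof (rule cproj_eqI[OF assms])
  show "scaleC a (cproj M x) \<in> M"
    using assms by (simp add: cproj_in csubspace_scaleC)
  have "scaleC a x - scaleC a (cproj M x) = scaleC a (x - cproj M x)"
    by (simp add: scaleC_diff_right)
  then show "scaleC a x - scaleC a (cproj M x) \<in> orth_compl M"
    using assms cproj_orth csubspace_orth_compl csubspace_scaleC by metis
qed

lemma cinner_cproj_commute:
  fixes M :: "'a::{complex_inner,complete_space} set"
  assumes "csubspace M" "closed M"
  shows "cinner (cproj M x) y = cinner x (cproj M y)"
proof -
  have "cinner (cproj M x) (y - cproj M y) = 0" "cinner (x - cproj M x) (cproj M y) = 0"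
    using assms cproj_in cproj_orth orth_complD orth_complD' by blast+
  then show ?thesis by (simp add: cinner_diff_left cinner_diff_right)
qed

section \<open>Riesz representation and the adjoint\<close>

lemma riesz_representation:
  fixes \<phi> :: "'a::{complex_inner,complete_space} \<Rightarrow> complex"
  assumes add: "\<And>x y. \<phi> (x + y) = \<phi> x + \<phi> y"
    and scale: "\<And>a x. \<phi> (scaleC a x) = a * \<phi> x"
    and bound: "\<And>x. cmod (\<phi> x) \<le> B * norm x"
  obtains w where "\<And>x. \<phi> x = cinner x w"
proof (cases "\<forall>x. \<phi> x = 0")
  case True
  then show ?thesis using that[of 0] by simp
next
  case False
  then obtain x0 where x0: "\<phi> x0 \<noteq> 0" by blast
  have "bounded_linear \<phi>"
  proof (rule bounded_linear_intro)
    show "norm (\<phi> x) \<le> norm x * B" for x using bound[of x] by (simp add: mult.commute)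
  qed (simp_all add: add scaleR_scaleC scale scaleR_conv_of_real)
  have \<phi>_diff: "\<phi> (x - y) = \<phi> x - \<phi> y" for x y
    using add[of "x - y" y] by simp
  define N where "N = \<phi> -` {0}"
  have N: "csubspace N" "closed N"
    unfolding csubspace_def N_def using add scale \<phi>_diff[of 0 0] \<open>bounded_linear \<phi>\<close>
    by (auto intro!: continuous_closed_vimage simp: linear_continuous_at)
  \<comment> \<open>the representing vector is a multiple of the component of \<open>x0\<close> orthogonal to the kernel\<close>
  define z where "z = x0 - cproj N x0"
  have "z \<in> orth_compl N"
    unfolding z_def by (rule cproj_orth[OF N])
  have "\<phi> z = \<phi> x0"
    using cproj_in[OF N, of x0] by (simp add: z_def N_def \<phi>_diff)
  then have "cinner z z \<noteq> 0"
    using x0 cinner_eq_zero_iff[of z] \<phi>_diff[of 0 0] by auto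
  have "\<phi> x = cinner x (scaleC (cnj (\<phi> z / cinner z z)) z)" for x
  proof -
    have "\<phi> (x - scaleC (\<phi> x / \<phi> z) z) = 0"
      using x0 \<open>\<phi> z = \<phi> x0\<close> by (simp add: \<phi>_diff scale)
    then have "cinner (x - scaleC (\<phi> x / \<phi> z) z) z = 0"
      using orth_complD'[OF \<open>z \<in> orth_compl N\<close>] cinner_commute[of _ z]
      by (simp add: N_def)
    then have "cinner x z = (\<phi> x / \<phi> z) * cinner z z"
      by (simp add: cinner_diff_left cinner_scaleC_left)
    then show ?thesis
      using \<open>cinner z z \<noteq> 0\<close> x0 \<open>\<phi> z = \<phi> x0\<close> by (simp add: cinner_scaleC_right)
  qed
  then show ?thesis by (rule that)
qed

lemma cinner_cadjoint:
  fixes K :: "'a::{complex_inner,complete_space} \<Rightarrow> 'b::complex_inner"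
  assumes "bounded_clinear K"
  shows "cinner (K x) y = cinner x (cadjoint K y)"
proof -
  from assms obtain B where B: "\<And>x. norm (K x) \<le> B * norm x"
    unfolding bounded_clinear_def by blast
  have "\<exists>w. \<forall>x. cinner (K x) y = cinner x w" for y
  proof -
    have "cmod (cinner (K x) y) \<le> (B * norm y) * norm x" for x
      using norm_cinner_le[of "K x" y] B[of x] mult_right_mono[OF B[of x], of "norm y"]
      by (simp add: algebra_simps)
    then obtain w where "\<And>x. cinner (K x) y = cinner x w"
      using riesz_representation[of "\<lambda>x. cinner (K x) y"]
      by (metis bounded_clinearD[OF assms] cinner_add_left cinner_scaleC_left)
    then show ?thesis by blast
  qed
  then have "\<exists>G. \<forall>x y. cinner (K x) y = cinner x (G y)" by metis
  then have "\<forall>x y. cinner (K x) y = cinner x (cadjoint K y)"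
    unfolding cadjoint_def by (rule someI_ex)
  then show ?thesis by blast
qed

lemma cinner_cadjoint_left:
  fixes K :: "'a::{complex_inner,complete_space} \<Rightarrow> 'b::complex_inner"
  assumes "bounded_clinear K"
  shows "cinner y (K x) = cinner (cadjoint K y) x"
  using cinner_cadjoint[OF assms, of x y] cinner_commute[of y "K x"]
    cinner_commute[of "cadjoint K y" x] by simp

section \<open>Bounded preimages for operators with closed range\<close>

lemma closed_range_ball_in_closure_image:
  fixes K :: "'a::real_normed_vector \<Rightarrow> 'b::{real_normed_vector,complete_space}"
  assumes "bounded_linear K" "closed (range K)"
  obtains n :: nat and y0 r
  where "0 < r" "y0 \<in> range K" "range K \<inter> ball y0 r \<subseteq> closure (K ` cball 0 (real n))"
proof -
  define T where "T n = closure (K ` cball 0 (real n))" for n :: nat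
  define X where "X = top_of_set (range K)"
  have T_sub: "T n \<subseteq> range K" for n
    unfolding T_def by (rule closure_minimal[OF _ assms(2)]) blast
  have "\<Union>(range T) = range K"
  proof (intro equalityI subsetI)
    fix y assume "y \<in> range K"
    then obtain x where "y = K x" by blast
    moreover obtain n :: nat where "norm x \<le> real n" using real_arch_simple by blast
    ultimately have "y \<in> T n" unfolding T_def by (auto intro!: closure_subset[THEN subsetD])
    then show "y \<in> \<Union>(range T)" by blast
  qed (use T_sub in blast)
  \<comment> \<open>Baire: the closed sets \<open>T n\<close> cover the complete space \<open>range K\<close>, so one has interior\<close>
  have "\<exists>n. X interior_of T n \<noteq> {}"
  proof (rule ccontr)
    assume "\<not> (\<exists>n. X interior_of T n \<noteq> {})"
    moreover have "completely_metrizable_space X"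
      unfolding X_def using assms(2)
      by (intro completely_metrizable_space_closedin completely_metrizable_space_euclidean) simp
    moreover have "closedin X (T n)" for n
      unfolding X_def using T_sub by (intro closed_subset) (simp_all add: T_def)
    ultimately have "X interior_of \<Union>(range T) = {}"
      by (intro Baire_category_alt) auto
    then show False
      using \<open>\<Union>(range T) = range K\<close> interior_of_topspace[of X] by (simp add: X_def)
  qed
  then obtain n y0 U where U: "openin X U" "y0 \<in> U" "U \<subseteq> T n"
    unfolding interior_of_def by blast
  then obtain V where V: "open V" "U = range K \<inter> V"
    unfolding X_def openin_open by blast
  then obtain r where "0 < r" "ball y0 r \<subseteq> V"
    using U(2) open_contains_ball by blast
  then show ?thesis
    using that[of r y0 n] U V by (auto simp: T_def)
qed

lemma closed_range_small_approx_preimage: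
  fixes K :: "'a::real_normed_vector \<Rightarrow> 'b::{real_normed_vector,complete_space}"
  assumes K: "bounded_linear K" and "closed (range K)"
  obtains r and n :: nat where "0 < r"
    and "\<And>v \<epsilon>. v \<in> range K \<Longrightarrow> norm v < r \<Longrightarrow> 0 < \<epsilon> \<Longrightarrow>
      \<exists>x. norm x \<le> 2 * real n \<and> norm (v - K x) < \<epsilon>"
proof -
  interpret K: bounded_linear K by (rule K)
  obtain n :: nat and y0 r where "0 < r" "y0 \<in> range K"
    and ball: "range K \<inter> ball y0 r \<subseteq> closure (K ` cball 0 (real n))"
    by (rule closed_range_ball_in_closure_image[OF assms])
  have near: "\<exists>x. norm x \<le> real n \<and> norm (K x - w) < \<epsilon>"
    if w: "w \<in> closure (K ` cball 0 (real n))" and "0 < \<epsilon>" for w \<epsilon>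
  proof -
    obtain u where "u \<in> K ` cball 0 (real n)" "dist u w < \<epsilon>"
      using w \<open>0 < \<epsilon>\<close> closure_approachable by metis
    then obtain x where "norm x \<le> real n" "dist (K x) w < \<epsilon>"
      by auto
    then show ?thesis
      by (metis dist_norm)
  qed
  \<comment> \<open>translate the ball around \<open>y0\<close> to the origin\<close>
  have small: "\<exists>x. norm x \<le> 2 * real n \<and> norm (v - K x) < \<epsilon>"
    if "v \<in> range K" "norm v < r" "0 < \<epsilon>" for v \<epsilon>
  proof -
    have "y0 + v \<in> range K"
      using \<open>y0 \<in> range K\<close> that(1) by (auto simp: K.add[symmetric])
    then have "y0 + v \<in> range K \<inter> ball y0 r" "y0 \<in> range K \<inter> ball y0 r"
      using that(2) \<open>0 < r\<close> \<open>y0 \<in> range K\<close> by (simp_all add: dist_norm)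
    then have "y0 + v \<in> closure (K ` cball 0 (real n))" "y0 \<in> closure (K ` cball 0 (real n))"
      using ball by blast+
    then obtain x1 x2 where x12: "norm x1 \<le> real n" "norm (K x1 - (y0 + v)) < \<epsilon>/2"
        "norm x2 \<le> real n" "norm (K x2 - y0) < \<epsilon>/2"
      using near \<open>0 < \<epsilon>\<close> half_gt_zero by metis
    have "v - K (x1 - x2) = (K x2 - y0) - (K x1 - (y0 + v))"
      by (simp add: K.diff)
    then have "norm (v - K (x1 - x2)) \<le> norm (K x2 - y0) + norm (K x1 - (y0 + v))"
      by (metis norm_triangle_ineq4)
    then have "norm (v - K (x1 - x2)) < \<epsilon>"
      using x12 by linarith
    moreover have "norm (x1 - x2) \<le> 2 * real n"
      using x12 norm_triangle_ineq4[of x1 x2] by simp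
    ultimately show ?thesis by blast
  qed
  show ?thesis
    by (rule that[OF \<open>0 < r\<close> small])
qed

lemma closed_range_approx_preimage:
  fixes K :: "'a::real_normed_vector \<Rightarrow> 'b::{real_normed_vector,complete_space}"
  assumes K: "bounded_linear K" and "closed (range K)"
  obtains C where "0 \<le> C"
    and "\<And>y. y \<in> range K \<Longrightarrow> \<exists>x. norm x \<le> C * norm y \<and> norm (y - K x) \<le> norm y / 2"
proof (rule closed_range_small_approx_preimage[OF assms])
  interpret K: bounded_linear K by (rule K)
  fix r and n :: nat
  assume "0 < r"
    and small: "\<And>v \<epsilon>. v \<in> range K \<Longrightarrow> norm v < r \<Longrightarrow> 0 < \<epsilon> \<Longrightarrow>
      \<exists>x. norm x \<le> 2 * real n \<and> norm (v - K x) < \<epsilon>"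
  have "\<exists>x. norm x \<le> (4 * real n / r) * norm y \<and> norm (y - K x) \<le> norm y / 2"
    if "y \<in> range K" for y
  proof (cases "y = 0")
    case True
    then show ?thesis by (intro exI[of _ 0]) simp
  next
    case False
    define s where "s = r / (2 * norm y)"
    have "0 < s" using \<open>0 < r\<close> False by (simp add: s_def)
    have "scaleR s y \<in> range K"
      using that by (auto simp: K.scaleR[symmetric])
    moreover have "norm (scaleR s y) < r"
      using \<open>0 < r\<close> \<open>0 < s\<close> False by (simp add: s_def)
    moreover have "0 < s * (norm y / 2)"
      using \<open>0 < s\<close> False by simp
    ultimately obtain x where x: "norm x \<le> 2 * real n" "norm (scaleR s y - K x) < s * (norm y / 2)"
      using small by blast
    have "y - K (scaleR (1/s) x) = scaleR (1/s) (scaleR s y - K x)"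
      using \<open>0 < s\<close> by (simp add: K.scaleR algebra_simps)
    then have "norm (y - K (scaleR (1/s) x)) = norm (scaleR s y - K x) / s"
      using \<open>0 < s\<close> by simp
    also have "\<dots> \<le> norm y / 2"
      using x(2) \<open>0 < s\<close> by (simp add: divide_le_eq mult.commute)
    finally have "norm (y - K (scaleR (1/s) x)) \<le> norm y / 2" .
    moreover have "norm (scaleR (1/s) x) = norm x * (2 * norm y / r)"
      using \<open>0 < r\<close> by (simp add: s_def)
    moreover have "norm x * (2 * norm y / r) \<le> (4 * real n / r) * norm y"
      using x(1) \<open>0 < r\<close> mult_right_mono[OF x(1), of "2 * norm y / r"] by simp
    ultimately show ?thesis by (metis order_trans)
  qed
  then show ?thesis
    using that[of "4 * real n / r"] \<open>0 < r\<close> by simp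
qed

lemma dist_le_geometric_tail:
  fixes x :: "nat \<Rightarrow> 'a::metric_space"
  assumes step: "\<And>n. dist (x (Suc n)) (x n) \<le> a * (1/2)^n" and "N \<le> n"
  shows "dist (x n) (x N) \<le> 2 * a * (1/2)^N"
proof -
  have "dist (x n) (x N) \<le> 2 * a * (1/2)^N - 2 * a * (1/2)^n"
    using \<open>N \<le> n\<close>
  proof (induction n rule: dec_induct)
    case (step n)
    have "dist (x (Suc n)) (x N) \<le> dist (x (Suc n)) (x n) + dist (x n) (x N)"
      by (rule dist_triangle)
    also have "\<dots> \<le> a * (1/2)^n + (2 * a * (1/2)^N - 2 * a * (1/2)^n)"
      using assms(1) step.IH by (rule add_mono)
    finally show ?case by simp
  qed simp
  moreover have "0 \<le> a" using order_trans[OF zero_le_dist step[of 0]] by simp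
  then have "0 \<le> 2 * a * (1/2)^n" by simp
  ultimately show ?thesis by linarith
qed

text \<open>Successive approximation: correcting the residual \<open>y - K x\<^sub>n\<close> by an approximate
  preimage halves it at every step, and the corrections form a geometric series.\<close>
lemma bounded_preimage_if_approx_preimage:
  fixes K :: "'a::{real_normed_vector,complete_space} \<Rightarrow> 'b::real_normed_vector"
  assumes K: "bounded_linear K" and "0 \<le> C"
    and approx: "\<And>y. y \<in> range K \<Longrightarrow> \<exists>x. norm x \<le> C * norm y \<and> norm (y - K x) \<le> norm y / 2"
    and "y \<in> range K"
  shows "\<exists>x. K x = y \<and> norm x \<le> 2 * C * norm y"
proof -
  interpret K: bounded_linear K by (rule K)
  obtain h where h: "\<And>v. v \<in> range K \<Longrightarrow> norm (h v) \<le> C * norm v \<and> norm (v - K (h v)) \<le> norm v / 2"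
    using approx by metis
  define x where "x = rec_nat 0 (\<lambda>_ x. x + h (y - K x))"
  have x_Suc: "x (Suc n) = x n + h (y - K (x n))" for n by (simp add: x_def)
  have residual_in: "y - K (x n) \<in> range K" for n
    using \<open>y \<in> range K\<close> by (auto simp: K.diff[symmetric])
  have residual: "norm (y - K (x n)) \<le> norm y * (1/2)^n" for n
  proof (induction n)
    case (Suc n)
    have "y - K (x (Suc n)) = (y - K (x n)) - K (h (y - K (x n)))"
      by (simp add: x_Suc K.add)
    then have "norm (y - K (x (Suc n))) \<le> norm (y - K (x n)) / 2"
      using h[OF residual_in[of n]] by (simp only:)
    also have "\<dots> \<le> norm y * (1/2)^n / 2"
      using Suc.IH by simp
    finally show ?case by simp
  qed (simp add: x_def)
  have "dist (x (Suc n)) (x n) \<le> (C * norm y) * (1/2)^n" for n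
  proof -
    have "dist (x (Suc n)) (x n) \<le> C * norm (y - K (x n))"
      using h[OF residual_in[of n]] by (simp add: x_Suc dist_norm)
    also have "\<dots> \<le> C * (norm y * (1/2)^n)"
      using mult_left_mono[OF residual \<open>0 \<le> C\<close>] by simp
    finally show ?thesis by simp
  qed
  note tail = dist_le_geometric_tail[of x, OF this]
  have geometric: "(\<lambda>n. c * (1/2)^n) \<longlonglongrightarrow> 0" for c :: real
    by (intro tendsto_mult_right_zero LIMSEQ_power_zero) simp
  have "Cauchy x"
    by (rule Cauchy_if_dist_le[OF tail geometric])
  then obtain z where lim: "x \<longlonglongrightarrow> z"
    using Cauchy_convergent_iff convergent_def by blast
  have "(\<lambda>n. y - K (x n)) \<longlonglongrightarrow> 0"
    by (rule Lim_null_comparison[OF always_eventually[OF allI[OF residual]] geometric])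
  from tendsto_diff[OF tendsto_const[of y] this] have "(\<lambda>n. K (x n)) \<longlonglongrightarrow> y"
    by simp
  then have "K z = y"
    using K.tendsto[OF lim] LIMSEQ_unique by blast
  moreover have "norm z \<le> 2 * C * norm y"
  proof (rule LIMSEQ_le_const2[OF tendsto_norm[OF lim]])
    show "\<exists>N. \<forall>n\<ge>N. norm (x n) \<le> 2 * C * norm y"
      using tail[of 0] by (auto simp: x_def dist_norm mult.assoc)
  qed
  ultimately show ?thesis by blast
qed

lemma closed_range_bounded_preimage:
  fixes K :: "'a::{real_normed_vector,complete_space} \<Rightarrow> 'b::{real_normed_vector,complete_space}"
  assumes "bounded_linear K" "closed (range K)"
  obtains C where "0 \<le> C" "\<And>y. y \<in> range K \<Longrightarrow> \<exists>x. K x = y \<and> norm x \<le> C * norm y"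
proof (rule closed_range_approx_preimage[OF assms])
  fix C assume "0 \<le> C"
    and "\<And>y. y \<in> range K \<Longrightarrow> \<exists>x. norm x \<le> C * norm y \<and> norm (y - K x) \<le> norm y / 2"
  then show ?thesis
    using that[of "2 * C"] bounded_preimage_if_approx_preimage[OF assms(1)] by simp
qed

section \<open>The Moore--Penrose pseudo-inverse\<close>

lemma csubspace_range:
  assumes "bounded_clinear K"
  shows "csubspace (range K)"
  unfolding csubspace_def
proof (intro conjI ballI allI)
  show "0 \<in> range K"
    using bounded_clinear_zero[OF assms] by (metis rangeI)
next
  fix u v assume "u \<in> range K" "v \<in> range K"
  then obtain x y where "u = K x" "v = K y" by blast
  then have "u + v = K (x + y)" by (simp add: bounded_clinearD[OF assms])
  then show "u + v \<in> range K" by simp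
next
  fix a u assume "u \<in> range K"
  then obtain x where "u = K x" by blast
  then have "scaleC a u = K (scaleC a x)" by (simp add: bounded_clinearD[OF assms])
  then show "scaleC a u \<in> range K" by simp
qed

lemma csubspace_ker: "bounded_clinear K \<Longrightarrow> csubspace (ker K)"
  unfolding csubspace_def ker_def
  by (simp add: bounded_clinearD bounded_clinear_zero)

lemma closed_ker:
  fixes K :: "'a::complex_inner \<Rightarrow> 'b::complex_inner"
  assumes "bounded_clinear K"
  shows "closed (ker K)"
proof -
  have "ker K = K -` {0}" by (auto simp: ker_def)
  then show ?thesis
    using bounded_clinear_bounded_linear[OF assms]
    by (auto intro!: continuous_closed_vimage simp: linear_continuous_at)
qed

locale closed_range_operator =
  fixes K :: "'h::{complex_inner,complete_space} \<Rightarrow> 'h"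
  assumes bounded_clinear: "bounded_clinear K" and closed_range: "closed (range K)"
begin

lemma closed_csubspace_ker: "csubspace (ker K)" "closed (ker K)"
  using bounded_clinear by (simp_all add: csubspace_ker closed_ker)

lemma closed_csubspace_range: "csubspace (range K)" "closed (range K)"
  using bounded_clinear closed_range by (simp_all add: csubspace_range)

sublocale K: bounded_linear K
  by (rule bounded_clinear_bounded_linear[OF bounded_clinear])

lemma K_diff_cproj_ker: "K (x - cproj (ker K) x) = K x"
  using cproj_in[OF closed_csubspace_ker, of x] by (simp add: K.diff ker_def)

lemma pinv_eqI:
  assumes "u \<in> orth_compl (ker K)" "K u = cproj (range K) y"
  shows "pinv K y = u"
  unfolding pinv_def
proof (rule the_equality)
  fix v assume v: "v \<in> orth_compl (ker K) \<and> K v = cproj (range K) y"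
  have "v - u \<in> ker K" using v assms(2) by (simp add: ker_def K.diff)
  moreover have "v - u \<in> orth_compl (ker K)"
    using v assms(1) csubspace_diff[OF csubspace_orth_compl] by blast
  ultimately show "v = u" using orth_compl_Int_eq_0 by fastforce
qed (use assms in simp)

lemma pinv_eq_diff_cproj: "K x = cproj (range K) y \<Longrightarrow> pinv K y = x - cproj (ker K) x"
  by (rule pinv_eqI) (simp_all add: cproj_orth[OF closed_csubspace_ker] K_diff_cproj_ker)

lemma
  shows pinv_in_orth_compl: "pinv K y \<in> orth_compl (ker K)"
    and K_pinv: "K (pinv K y) = cproj (range K) y"
proof -
  obtain x where "K x = cproj (range K) y"
    using cproj_in[OF closed_csubspace_range, of y] by (metis rangeE)
  then show "pinv K y \<in> orth_compl (ker K)" "K (pinv K y) = cproj (range K) y"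
    by (simp_all add: pinv_eq_diff_cproj cproj_orth[OF closed_csubspace_ker] K_diff_cproj_ker)
qed

lemma pinv_K: "pinv K (K x) = x - cproj (ker K) x"
proof (rule pinv_eq_diff_cproj)
  show "K x = cproj (range K) (K x)"
    by (rule cproj_eqI[OF closed_csubspace_range, symmetric])
       (simp_all add: csubspace_0[OF csubspace_orth_compl])
qed

lemma bounded_clinear_pinv: "bounded_clinear (pinv K)"
proof -
  obtain C where C: "\<And>y. y \<in> range K \<Longrightarrow> \<exists>x. K x = y \<and> norm x \<le> C * norm y" "0 \<le> C"
    using closed_range_bounded_preimage[OF K.bounded_linear_axioms closed_range] by metis
  have "norm (pinv K y) \<le> C * norm y" for y
  proof -
    obtain x where x: "K x = cproj (range K) y" "norm x \<le> C * norm (cproj (range K) y)"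
      using C(1)[OF cproj_in[OF closed_csubspace_range]] by blast
    have "norm (pinv K y) \<le> norm x"
      using norm_diff_cproj_le[OF closed_csubspace_ker] by (simp add: pinv_eq_diff_cproj[OF x(1)])
    also have "\<dots> \<le> C * norm y"
      using x(2) mult_left_mono[OF norm_cproj_le[OF closed_csubspace_range, of y] C(2)] by linarith
    finally show ?thesis .
  qed
  moreover have "pinv K (x + y) = pinv K x + pinv K y" for x y
    by (rule pinv_eqI)
       (simp_all add: csubspace_add[OF csubspace_orth_compl] pinv_in_orth_compl
         bounded_clinearD[OF bounded_clinear] K_pinv cproj_add[OF closed_csubspace_range])
  moreover have "pinv K (scaleC a x) = scaleC a (pinv K x)" for a x
    by (rule pinv_eqI)
       (simp_all add: csubspace_scaleC[OF csubspace_orth_compl] pinv_in_orth_compl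
         bounded_clinearD[OF bounded_clinear] K_pinv cproj_scaleC[OF closed_csubspace_range])
  ultimately show ?thesis
    by (rule_tac bounded_clinear_intro) auto
qed

lemma cadjoint_cadjoint_pinv:
  "cadjoint K (cadjoint (pinv K) f) = f - cproj (ker K) f"
proof (rule cinner_eq_rightI)
  fix x
  have "cinner x (cadjoint K (cadjoint (pinv K) f)) = cinner (pinv K (K x)) f"
    by (simp add: cinner_cadjoint bounded_clinear bounded_clinear_pinv)
  also have "\<dots> = cinner x (f - cproj (ker K) f)"
    by (simp add: pinv_K cinner_diff_left cinner_diff_right
        cinner_cproj_commute[OF closed_csubspace_ker])
  finally show "cinner x (cadjoint K (cadjoint (pinv K) f)) = cinner x (f - cproj (ker K) f)" .
qed

lemma cinner_K_cadjoint_pinv: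
  "cinner (K f) (cadjoint (pinv K) f) = complex_of_real ((norm (f - cproj (ker K) f))\<^sup>2)"
proof -
  let ?Q = "f - cproj (ker K) f"
  have "cinner (cproj (ker K) f) ?Q = 0"
    by (rule orth_complD[OF cproj_orth[OF closed_csubspace_ker] cproj_in[OF closed_csubspace_ker]])
  have "cinner (K f) (cadjoint (pinv K) f) = cinner (?Q + cproj (ker K) f) ?Q"
    by (simp add: cinner_cadjoint[OF bounded_clinear] cadjoint_cadjoint_pinv)
  also have "\<dots> = complex_of_real ((norm ?Q)\<^sup>2)"
    using \<open>cinner (cproj (ker K) f) ?Q = 0\<close> by (simp only: cinner_add_left cinner_self add_0_right)
  finally show ?thesis .
qed

end

lemma parseval_cont_K_frame_square_integral:
  assumes "parseval_cont_K_frame M K F"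
  shows "integrable M (\<lambda>\<omega>. (cmod (cinner h (F \<omega>)))\<^sup>2)"
    and "(\<integral>\<omega>. (cmod (cinner h (F \<omega>)))\<^sup>2 \<partial>M) = (norm (cadjoint K h))\<^sup>2"
proof -
  have "(\<lambda>\<omega>. cinner h (F \<omega>)) \<in> borel_measurable M"
    using assms unfolding parseval_cont_K_frame_def weakly_measurable_def by blast
  then have meas: "(\<lambda>\<omega>. (cmod (cinner h (F \<omega>)))\<^sup>2) \<in> borel_measurable M"
    by measurable
  have nn: "(\<integral>\<^sup>+\<omega>. ennreal ((cmod (cinner h (F \<omega>)))\<^sup>2) \<partial>M) = ennreal ((norm (cadjoint K h))\<^sup>2)"
    using assms unfolding parseval_cont_K_frame_def by blast
  show "integrable M (\<lambda>\<omega>. (cmod (cinner h (F \<omega>)))\<^sup>2)"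
    by (rule integrableI_nn_integral_finite[OF meas _ nn]) simp
  show "(\<integral>\<omega>. (cmod (cinner h (F \<omega>)))\<^sup>2 \<partial>M) = (norm (cadjoint K h))\<^sup>2"
    using integral_eq_nn_integral[OF meas] nn by simp
qed

lemma has_weak_integralD:
  assumes "has_weak_integral M c F v"
  shows "integrable M (\<lambda>\<omega>. c \<omega> * cnj (cinner h (F \<omega>)))"
    and "(\<integral>\<omega>. c \<omega> * cnj (cinner h (F \<omega>)) \<partial>M) = cinner v h"
proof -
  have "cnj (cinner h (F \<omega>)) = cinner (F \<omega>) h" for \<omega>
    by (metis cinner_commute complex_cnj_cnj)
  then show "integrable M (\<lambda>\<omega>. c \<omega> * cnj (cinner h (F \<omega>)))"
    and "(\<integral>\<omega>. c \<omega> * cnj (cinner h (F \<omega>)) \<partial>M) = cinner v h"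
    using assms unfolding has_weak_integral_def by simp_all
qed

lemma integral_cmod_diff_power2:
  fixes c d :: "'w \<Rightarrow> complex"
  assumes "integrable M (\<lambda>\<omega>. (cmod (c \<omega>))\<^sup>2)" "integrable M (\<lambda>\<omega>. (cmod (d \<omega>))\<^sup>2)"
    and "integrable M (\<lambda>\<omega>. c \<omega> * cnj (d \<omega>))"
  shows "(\<integral>\<omega>. (cmod (c \<omega> - d \<omega>))\<^sup>2 \<partial>M)
       = (\<integral>\<omega>. (cmod (c \<omega>))\<^sup>2 \<partial>M) + (\<integral>\<omega>. (cmod (d \<omega>))\<^sup>2 \<partial>M)
         - 2 * Re (\<integral>\<omega>. c \<omega> * cnj (d \<omega>) \<partial>M)"
proof -
  have "integrable M (\<lambda>\<omega>. Re (c \<omega> * cnj (d \<omega>)))"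
    using assms(3) by (rule integrable_Re)
  have "(\<integral>\<omega>. (cmod (c \<omega> - d \<omega>))\<^sup>2 \<partial>M)
      = (\<integral>\<omega>. ((cmod (c \<omega>))\<^sup>2 + (cmod (d \<omega>))\<^sup>2) - 2 * Re (c \<omega> * cnj (d \<omega>)) \<partial>M)"
    by (rule Bochner_Integration.integral_cong) (simp_all add: cmod_power2 power2_diff algebra_simps)
  also have "\<dots> = (\<integral>\<omega>. (cmod (c \<omega>))\<^sup>2 + (cmod (d \<omega>))\<^sup>2 \<partial>M) - (\<integral>\<omega>. 2 * Re (c \<omega> * cnj (d \<omega>)) \<partial>M)"
    using assms(1,2) \<open>integrable M (\<lambda>\<omega>. Re (c \<omega> * cnj (d \<omega>)))\<close>
    by (intro Bochner_Integration.integral_diff Bochner_Integration.integrable_add integrable_mult_right)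
  also have "(\<integral>\<omega>. (cmod (c \<omega>))\<^sup>2 + (cmod (d \<omega>))\<^sup>2 \<partial>M)
      = (\<integral>\<omega>. (cmod (c \<omega>))\<^sup>2 \<partial>M) + (\<integral>\<omega>. (cmod (d \<omega>))\<^sup>2 \<partial>M)"
    using assms(1,2) by (rule Bochner_Integration.integral_add)
  also have "(\<integral>\<omega>. 2 * Re (c \<omega> * cnj (d \<omega>)) \<partial>M) = 2 * Re (\<integral>\<omega>. c \<omega> * cnj (d \<omega>) \<partial>M)"
    by (simp only: integral_mult_right_zero integral_Re[OF assms(3)])
  finally show ?thesis .
qed

theorem theorem3p9:
  fixes M :: "'w measure"
    and K :: "'h::{complex_inner, complete_space} \<Rightarrow> 'h"
    and F :: "'w \<Rightarrow> 'h"
    and f :: 'h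
    and c :: "'w \<Rightarrow> complex"
  assumes "separable_space TYPE('h)"
    and "bounded_clinear K"
    and "closed (range K)"
    and "parseval_cont_K_frame M K F"
    and "square_integrable M c"
    and "has_weak_integral M c F (K f)"
  shows "(\<integral>\<omega>. (cmod (c \<omega>))\<^sup>2 \<partial>M) =
           (\<integral>\<omega>. (cmod (c \<omega> - cinner f (pinv K (F \<omega>))))\<^sup>2 \<partial>M)
         + (\<integral>\<omega>. (cmod (cinner f (pinv K (F \<omega>))))\<^sup>2 \<partial>M)"
proof -
  interpret closed_range_operator K
    using assms(2,3) by unfold_locales
  define g where "g = cadjoint (pinv K) f"
  define r where "r = (norm (f - cproj (ker K) f))\<^sup>2"
  have dual: "cinner f (pinv K (F \<omega>)) = cinner g (F \<omega>)" for \<omega>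
    unfolding g_def by (rule cinner_cadjoint_left[OF bounded_clinear_pinv])
  have "integrable M (\<lambda>\<omega>. (cmod (cinner g (F \<omega>)))\<^sup>2)"
    and "(\<integral>\<omega>. (cmod (cinner g (F \<omega>)))\<^sup>2 \<partial>M) = r"
    using parseval_cont_K_frame_square_integral[OF assms(4), of g]
    by (simp_all add: g_def r_def cadjoint_cadjoint_pinv)
  moreover have "integrable M (\<lambda>\<omega>. c \<omega> * cnj (cinner g (F \<omega>)))"
    and "(\<integral>\<omega>. c \<omega> * cnj (cinner g (F \<omega>)) \<partial>M) = complex_of_real r"
    using has_weak_integralD[OF assms(6), of g] by (simp_all add: g_def r_def cinner_K_cadjoint_pinv)
  moreover have "integrable M (\<lambda>\<omega>. (cmod (c \<omega>))\<^sup>2)"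
    using assms(5) by (simp add: square_integrable_def)
  ultimately show ?thesis
    using integral_cmod_diff_power2[of M c "\<lambda>\<omega>. cinner g (F \<omega>)"] by (simp add: dual)
qed

end
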